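(* Let $\mathcal N$ be an NDCS network with parties $A_1,\dots,A_n$, let $p$ be the output distribution of a causally consistent model on $\mathcal N$ (finite output alphabets), and let $f_i$ be arbitrary complex-valued functions of the outputs $a_i$. Then for every twisted Gram matrix $W$ (for any $d$, any vectors $\ket{\psi_1},\dots,\ket{\psi_n}\in\mathbb C^d$ and any permutations $\pi_i^\alpha$), the Schur product $\mathcal C(f_1,\dots,f_n)\circ W$ is positive semidefinite.
   Context: A network $\mathcal N$ is a bipartite graph between sources $S_\alpha$ and parties $A_i$ ($i=1,\dots,n$); $\alpha\to i$ means $S_\alpha$ is adjacent to $A_i$; no isolated vertices, and no two sources with comparable sets of adjacent parties. $\mathcal N$ is NDCS if any two distinct parties have at most one common adjacent source. Covariance matrix: $\mathcal C(f_1,\dots,f_n)_{ij}=\mathbb E[\bar f_i f_j]-\mathbb E[\bar f_i]\,\mathbb E[f_j]$. The Schur product is $(M\circ N)_{ij}=M_{ij}N_{ij}$. Twisted Gram matrix: given $d$, vectors $\ket{\psi_1},\dots,\ket{\psi_n}\in\mathbb C^d$, and for every pair $(\alpha,i)$ with $\alpha\to i$ a permutation $\pi_i^\alpha$ of $\{1,\dots,d\}$ with permutation matrix $P_{\pi_i^\alpha}$ ($P_{\pi}\ket x=\ket{\pi(x)}$), a twisted Gram matrix is an $n\times n$ Hermitian matrix $W$ with $W_{ii}=\langle\psi_i|\psi_i\rangle$ and $W_{ij}=\bra{\psi_i}P_{\pi_i^\alpha}^\dagger P_{\pi_j^\alpha}\ket{\psi_j}$ whenever $i\neq j$ and $\alpha\to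 i,j$ (well-defined by NDCS); entries $W_{ij}$ with $i\neq j$ sharing no source are arbitrary (subject to $W$ being Hermitian). Non-fanout inflation of order $d\ge 2$: choose, for every pair $(\alpha,i)$ with $\alpha\to i$, a permutation $\pi_i^\alpha$ of $\{1,\dots,d\}$. The inflated network has parties $A_i^{(k)}$ and sources $S_\alpha^{(k)}$ ($1\le k\le d$), with $S_\alpha^{(k)}$ adjacent to $A_i^{((\pi_i^\alpha)^{-1}(k))}$ whenever $\alpha\to i$, and no other adjacencies. Causally consistent model on $\mathcal N$: a joint distribution $p(a_1,\dots,a_n)$ of the outputs of $\mathcal N$ together with, for every non-fanout inflation of every order $d\ge2$, a joint distribution of the outputs $a_i^{(k)}$ of its parties, such that: (C0) if $A_i\neq A_j$ share no source in $\mathcal N$, then $p(a_i,a_j)=p(a_i)p(a_j)$; (C1) in every inflation, each $a_i^{(k)}$ has marginal $p(a_i)$, and if $A_i^{(k)}$ and $A_j^{(l)}$ with $i\neq j$ share a source in the inflation, then $(a_i^{(k)},a_j^{(l)})$ has joint distribution $p(a_i,a_j)$; (C2) in every inflation, if two distinct parties share no source, the joint distribution of their outputs is the product of their marginals. *)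

theory Defs
  imports "HOL-Probability.Probability" "HOL-Combinatorics.Permutations"
begin

text \<open>Parties are indexed by 0,...,n-1; sources are the elements of a set S of an
 arbitrary type; adj al i means that source al is adjacent to party i.\<close>

definition network :: "'s set \<Rightarrow> ('s \<Rightarrow> nat \<Rightarrow> bool) \<Rightarrow> nat \<Rightarrow> bool" where
  "network S adj n \<longleftrightarrow> finite S
     \<and> (\<forall>al\<in>S. \<exists>i<n. adj al i)
     \<and> (\<forall>i<n. \<exists>al\<in>S. adj al i)
     \<and> (\<forall>al\<in>S. \<forall>be\<in>S. al \<noteq> be \<longrightarrow>
           \<not> ({i. i < n \<and> adj al i} \<subseteq> {i. i < n \<and> adj be i}))"

definition ndcs :: "'s set \<Rightarrow> ('s \<Rightarrow> nat \<Rightarrow> bool) \<Rightarrow> nat \<Rightarrow> bool" where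
  "ndcs S adj n \<longleftrightarrow> network S adj n
     \<and> (\<forall>i<n. \<forall>j<n. i \<noteq> j \<longrightarrow> (\<forall>al\<in>S. \<forall>be\<in>S.
           adj al i \<and> adj al j \<and> adj be i \<and> adj be j \<longrightarrow> al = be))"

definition shares_source :: "'s set \<Rightarrow> ('s \<Rightarrow> nat \<Rightarrow> bool) \<Rightarrow> nat \<Rightarrow> nat \<Rightarrow> bool" where
  "shares_source S adj i j \<longleftrightarrow> (\<exists>al\<in>S. adj al i \<and> adj al j)"

definition perm_choice :: "'s set \<Rightarrow> ('s \<Rightarrow> nat \<Rightarrow> bool) \<Rightarrow> nat \<Rightarrow> nat \<Rightarrow> ('s \<Rightarrow> nat \<Rightarrow> nat \<Rightarrow> nat) \<Rightarrow> bool" where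
  "perm_choice S adj n d prm \<longleftrightarrow> (\<forall>al\<in>S. \<forall>i<n. adj al i \<longrightarrow> prm al i permutes {0..<d})"

text \<open>In the inflation, source copy S_al^(m) is adjacent to party copy A_i^((prm al i)^-1 m);
 equivalently party copy A_i^(k) is adjacent to source copy S_al^(prm al i k).\<close>
definition infl_shares_source :: "'s set \<Rightarrow> ('s \<Rightarrow> nat \<Rightarrow> bool) \<Rightarrow> ('s \<Rightarrow> nat \<Rightarrow> nat \<Rightarrow> nat)
    \<Rightarrow> nat \<times> nat \<Rightarrow> nat \<times> nat \<Rightarrow> bool" where
  "infl_shares_source S adj prm ik jl \<longleftrightarrow>
     (\<exists>al\<in>S. adj al (fst ik) \<and> adj al (fst jl) \<and> prm al (fst ik) (snd ik) = prm al (fst jl) (snd jl))"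

text \<open>Causally consistent model: p is the output distribution on the network (outputs of
 party i are coordinate i), and Q d prm is the output distribution of the non-fanout inflation
 of order d given by the permutation choice prm (outputs of party A_i^(k) are coordinate (i,k)).\<close>
definition causally_consistent ::
  "'s set \<Rightarrow> ('s \<Rightarrow> nat \<Rightarrow> bool) \<Rightarrow> nat \<Rightarrow> (nat \<Rightarrow> 'a) pmf
   \<Rightarrow> (nat \<Rightarrow> ('s \<Rightarrow> nat \<Rightarrow> nat \<Rightarrow> nat) \<Rightarrow> (nat \<times> nat \<Rightarrow> 'a) pmf) \<Rightarrow> bool" where
  "causally_consistent S adj n p Q \<longleftrightarrow>
     \<comment> \<open>C0\<close>
     (\<forall>i<n. \<forall>j<n. i \<noteq> j \<and> \<not> shares_source S adj i j \<longrightarrow>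
        map_pmf (\<lambda>x. (x i, x j)) p = pair_pmf (map_pmf (\<lambda>x. x i) p) (map_pmf (\<lambda>x. x j) p))
   \<and> (\<forall>d prm. 2 \<le> d \<and> perm_choice S adj n d prm \<longrightarrow>
        \<comment> \<open>C1\<close>
        (\<forall>i<n. \<forall>k<d. map_pmf (\<lambda>y. y (i, k)) (Q d prm) = map_pmf (\<lambda>x. x i) p)
      \<and> (\<forall>i<n. \<forall>j<n. \<forall>k<d. \<forall>l<d. i \<noteq> j \<and> infl_shares_source S adj prm (i, k) (j, l) \<longrightarrow>
           map_pmf (\<lambda>y. (y (i, k), y (j, l))) (Q d prm) = map_pmf (\<lambda>x. (x i, x j)) p)
        \<comment> \<open>C2\<close>
      \<and> (\<forall>i<n. \<forall>j<n. \<forall>k<d. \<forall>l<d. (i, k) \<noteq> (j, l) \<and> \<not> infl_shares_source S adj prm (i, k) (j, l) \<longrightarrow>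
           map_pmf (\<lambda>y. (y (i, k), y (j, l))) (Q d prm)
             = pair_pmf (map_pmf (\<lambda>y. y (i, k)) (Q d prm)) (map_pmf (\<lambda>y. y (j, l)) (Q d prm))))"

definition covariance :: "(nat \<Rightarrow> 'a) pmf \<Rightarrow> (nat \<Rightarrow> 'a \<Rightarrow> complex) \<Rightarrow> nat \<Rightarrow> nat \<Rightarrow> complex" where
  "covariance p f i j =
     measure_pmf.expectation p (\<lambda>x. cnj (f i (x i)) * f j (x j))
     - cnj (measure_pmf.expectation p (\<lambda>x. f i (x i))) * measure_pmf.expectation p (\<lambda>x. f j (x j))"

text \<open>Action of the permutation matrix P_pi (P_pi |x> = |prm x>) on a vector of C^d,
 vectors being functions on {0..<d}.\<close>
definition perm_mat_apply :: "nat \<Rightarrow> (nat \<Rightarrow> nat) \<Rightarrow> (nat \<Rightarrow> complex) \<Rightarrow> nat \<Rightarrow> complex" where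
  "perm_mat_apply d prm v y = (\<Sum>x<d. (if y = prm x then 1 else 0) * v x)"

definition cinner :: "nat \<Rightarrow> (nat \<Rightarrow> complex) \<Rightarrow> (nat \<Rightarrow> complex) \<Rightarrow> complex" where
  "cinner d u v = (\<Sum>y<d. cnj (u y) * v y)"

definition twisted_gram ::
  "'s set \<Rightarrow> ('s \<Rightarrow> nat \<Rightarrow> bool) \<Rightarrow> nat \<Rightarrow> nat \<Rightarrow> (nat \<Rightarrow> nat \<Rightarrow> complex)
   \<Rightarrow> ('s \<Rightarrow> nat \<Rightarrow> nat \<Rightarrow> nat) \<Rightarrow> (nat \<Rightarrow> nat \<Rightarrow> complex) \<Rightarrow> bool" where
  "twisted_gram S adj n d psi prm W \<longleftrightarrow>
     0 < d \<and> perm_choice S adj n d prm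
   \<and> (\<forall>i<n. \<forall>j<n. W j i = cnj (W i j))
   \<and> (\<forall>i<n. W i i = cinner d (psi i) (psi i))
   \<and> (\<forall>i<n. \<forall>j<n. \<forall>al\<in>S. i \<noteq> j \<and> adj al i \<and> adj al j \<longrightarrow>
        W i j = cinner d (perm_mat_apply d (prm al i) (psi i)) (perm_mat_apply d (prm al j) (psi j)))"

definition psd :: "nat \<Rightarrow> (nat \<Rightarrow> nat \<Rightarrow> complex) \<Rightarrow> bool" where
  "psd n M \<longleftrightarrow> (\<forall>i<n. \<forall>j<n. M j i = cnj (M i j))
     \<and> (\<forall>v. Im (\<Sum>i<n. \<Sum>j<n. cnj (v i) * M i j * v j) = 0
           \<and> 0 \<le> Re (\<Sum>i<n. \<Sum>j<n. cnj (v i) * M i j * v j))"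

end

theory Submission
  imports Defs
begin

text \<open>Given v in C^n and a twisted Gram matrix W of order d, take the inflation of order d
  built from the same permutations and the random variable
  Y = \<Sum> v_i psi_i(k) (f_i(a_i^(k)) - E f_i) over all party copies A_i^(k). Its second
  moment E |Y|^2 \<ge> 0 expands into \<Sum> cnj(v_i) v_j C_ij W_ij: two copies of one party share no
  source (the permutations are injective), copies of parties without a common source are
  independent, and copies of parties with a common source alpha -- unique by NDCS -- are
  distributed as in the network exactly when pi_i^alpha(k) = pi_j^alpha(l) and are independent
  otherwise; summing over these pairs produces W_ij. For d = 1 the network itself serves as the
  inflation.\<close>

lemma integrable_pmf_finite_range:
  fixes h :: "'b::finite \<Rightarrow> 'c::{banach, second_countable_topology}"
  shows "integrable (measure_pmf M) (\<lambda>x. h (\<phi> x))"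
  using integrable_measure_pmf_finite[of "map_pmf \<phi> M" h] by simp

lemma expectation_finite:
  fixes h :: "'b::finite \<Rightarrow> complex"
  shows "measure_pmf.expectation M h = (\<Sum>a\<in>UNIV. complex_of_real (pmf M a) * h a)"
  by (subst integral_measure_pmf[of UNIV]) (auto simp: scaleR_conv_of_real)

lemma expectation_pair_pmf_mult:
  fixes u :: "'b::finite \<Rightarrow> complex" and w :: "'c::finite \<Rightarrow> complex"
  shows "measure_pmf.expectation (pair_pmf A B) (\<lambda>z. u (fst z) * w (snd z))
       = measure_pmf.expectation A u * measure_pmf.expectation B w"
proof -
  have "measure_pmf.expectation (pair_pmf A B) (\<lambda>z. u (fst z) * w (snd z))
      = (\<Sum>z\<in>UNIV\<times>UNIV. complex_of_real (pmf (pair_pmf A B) z) * (u (fst z) * w (snd z)))"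
    by (subst expectation_finite) (simp add: UNIV_Times_UNIV[symmetric] del: UNIV_Times_UNIV)
  also have "\<dots> = (\<Sum>(a,b)\<in>UNIV\<times>UNIV. complex_of_real (pmf A a) * u a * (complex_of_real (pmf B b) * w b))"
    by (rule sum.cong) (auto simp: pmf_pair mult_ac)
  also have "\<dots> = (\<Sum>a\<in>UNIV. \<Sum>b\<in>UNIV. complex_of_real (pmf A a) * u a * (complex_of_real (pmf B b) * w b))"
    by (rule sum.cartesian_product[symmetric])
  also have "\<dots> = measure_pmf.expectation A u * measure_pmf.expectation B w"
    by (simp add: expectation_finite sum_product)
  finally show ?thesis .
qed

lemma second_moment_form_nonneg:
  fixes X :: "'i \<Rightarrow> 'b \<Rightarrow> complex"
  assumes "finite I"
    and integrable: "\<And>a b. a \<in> I \<Longrightarrow> b \<in> I \<Longrightarrow> integrable M (\<lambda>y. cnj (X a y) * X b y)"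
  shows "\<exists>r\<ge>0. (\<Sum>a\<in>I. \<Sum>b\<in>I. cnj (c a) * c b * (\<integral>y. cnj (X a y) * X b y \<partial>M))
           = complex_of_real r"
proof -
  define Y where "Y y = (\<Sum>a\<in>I. c a * X a y)" for y
  have "(\<Sum>a\<in>I. \<Sum>b\<in>I. cnj (c a) * c b * (\<integral>y. cnj (X a y) * X b y \<partial>M))
      = (\<integral>y. (\<Sum>a\<in>I. \<Sum>b\<in>I. cnj (c a * X a y) * (c b * X b y)) \<partial>M)"
    using integrable by (simp add: mult_ac)
  also have "\<dots> = (\<integral>y. cnj (Y y) * Y y \<partial>M)"
    unfolding Y_def cnj_sum sum_product ..
  also have "\<dots> = (\<integral>y. complex_of_real ((cmod (Y y))\<^sup>2) \<partial>M)"
    by (simp only: complex_norm_square mult.commute)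
  also have "\<dots> = complex_of_real (\<integral>y. (cmod (Y y))\<^sup>2 \<partial>M)"
    by (rule integral_complex_of_real)
  finally show ?thesis
    by (intro exI[of _ "\<integral>y. (cmod (Y y))\<^sup>2 \<partial>M"]) (auto intro: integral_nonneg)
qed

lemma cinner_perm_mat_apply:
  assumes "\<sigma> permutes {0..<d}" "\<tau> permutes {0..<d}"
  shows "cinner d (perm_mat_apply d \<sigma> u) (perm_mat_apply d \<tau> w)
       = (\<Sum>x<d. \<Sum>x'<d. if \<sigma> x = \<tau> x' then cnj (u x) * w x' else 0)"
proof -
  have range: "\<And>x. x < d \<Longrightarrow> \<sigma> x < d" "\<And>x. x < d \<Longrightarrow> \<tau> x < d"
    using assms by (metis atLeastLessThan_iff permutes_in_image zero_le)+
  have "cinner d (perm_mat_apply d \<sigma> u) (perm_mat_apply d \<tau> w)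
     = (\<Sum>y<d. \<Sum>x<d. \<Sum>x'<d. if y = \<sigma> x then if y = \<tau> x' then cnj (u x) * w x' else 0 else 0)"
    unfolding cinner_def perm_mat_apply_def cnj_sum sum_product by (intro sum.cong refl) simp
  also have "\<dots> = (\<Sum>x<d. \<Sum>x'<d. \<Sum>y<d. if y = \<sigma> x then if y = \<tau> x' then cnj (u x) * w x' else 0 else 0)"
    by (subst sum.swap) (rule sum.cong[OF refl], rule sum.swap)
  also have "\<dots> = (\<Sum>x<d. \<Sum>x'<d. if \<sigma> x = \<tau> x' then cnj (u x) * w x' else 0)"
    by (intro sum.cong refl) (auto simp: range if_distrib cong: if_cong)
  finally show ?thesis .
qed

definition centered :: "(nat \<Rightarrow> 'a) pmf \<Rightarrow> (nat \<Rightarrow> 'a \<Rightarrow> complex) \<Rightarrow> nat \<Rightarrow> 'a \<Rightarrow> complex" where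
  "centered p f i a = f i a - measure_pmf.expectation p (\<lambda>x. f i (x i))"

lemma expectation_centered:
  fixes p :: "(nat \<Rightarrow> 'a::finite) pmf"
  shows "measure_pmf.expectation (map_pmf (\<lambda>x. x i) p) (centered p f i) = 0"
  using integrable_pmf_finite_range[where h="f i" and \<phi>="\<lambda>x. x i"] by (simp add: centered_def)

lemma covariance_eq_centered_moment:
  fixes p :: "(nat \<Rightarrow> 'a::finite) pmf"
  shows "covariance p f i j
       = measure_pmf.expectation p (\<lambda>x. cnj (centered p f i (x i)) * centered p f j (x j))"
proof -
  define \<mu> where "\<mu> k = measure_pmf.expectation p (\<lambda>x. f k (x k))" for k
  have integrable: "integrable p (\<lambda>x. f k (x k))" "integrable p (\<lambda>x. cnj (f i (x i)) * f j (x j))" for k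
    using integrable_pmf_finite_range[where h="\<lambda>z. cnj (f i (fst z)) * f j (snd z)"
        and \<phi>="\<lambda>x. (x i, x j)"]
    by (auto intro: integrable_pmf_finite_range)
  have "(\<lambda>x. cnj (centered p f i (x i)) * centered p f j (x j)) = (\<lambda>x. cnj (f i (x i)) * f j (x j)
      - cnj (\<mu> i) * f j (x j) - \<mu> j * cnj (f i (x i)) + cnj (\<mu> i) * \<mu> j)"
    by (auto simp: centered_def \<mu>_def algebra_simps)
  then show ?thesis
    using integrable by (simp add: covariance_def \<mu>_def)
qed

lemma covariance_cnj_swap: "covariance p f j i = cnj (covariance p f i j)"
proof -
  have swap: "(\<lambda>x. f i (x i) * cnj (f j (x j))) = (\<lambda>x. cnj (f j (x j) * cnj (f i (x i))))"
    by (simp add: mult.commute)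
  have "measure_pmf.expectation p (\<lambda>x. f i (x i) * cnj (f j (x j)))
      = cnj (measure_pmf.expectation p (\<lambda>x. f j (x j) * cnj (f i (x i))))"
    unfolding swap by (rule Bochner_Integration.integral_cnj)
  then show ?thesis
    by (simp add: covariance_def mult.commute)
qed

lemma covariance_eq_0_if_indep:
  fixes p :: "(nat \<Rightarrow> 'a::finite) pmf"
  assumes "map_pmf (\<lambda>x. (x i, x j)) p = pair_pmf (map_pmf (\<lambda>x. x i) p) (map_pmf (\<lambda>x. x j) p)"
  shows "covariance p f i j = 0"
proof -
  have "covariance p f i j = measure_pmf.expectation (map_pmf (\<lambda>x. (x i, x j)) p)
      (\<lambda>z. cnj (centered p f i (fst z)) * centered p f j (snd z))"
    by (simp add: covariance_eq_centered_moment)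
  also have "\<dots> = measure_pmf.expectation (map_pmf (\<lambda>x. x i) p) (\<lambda>a. cnj (centered p f i a))
      * measure_pmf.expectation (map_pmf (\<lambda>x. x j) p) (centered p f j)"
    unfolding assms by (rule expectation_pair_pmf_mult)
  also have "\<dots> = 0"
    by (simp only: expectation_centered mult_zero_right)
  finally show ?thesis .
qed

text \<open>Conditions (C1) and (C2) for the single inflation of order d given by prm; unlike in
  causal consistency, d = 1 is allowed.\<close>
definition inflation_model :: "'s set \<Rightarrow> ('s \<Rightarrow> nat \<Rightarrow> bool) \<Rightarrow> nat \<Rightarrow> (nat \<Rightarrow> 'a) pmf
    \<Rightarrow> nat \<Rightarrow> ('s \<Rightarrow> nat \<Rightarrow> nat \<Rightarrow> nat) \<Rightarrow> (nat \<times> nat \<Rightarrow> 'a) pmf \<Rightarrow> bool" where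
  "inflation_model S adj n p d prm Q \<longleftrightarrow>
     (\<forall>i<n. \<forall>k<d. map_pmf (\<lambda>y. y (i, k)) Q = map_pmf (\<lambda>x. x i) p)
   \<and> (\<forall>i<n. \<forall>j<n. \<forall>k<d. \<forall>l<d. i \<noteq> j \<and> infl_shares_source S adj prm (i, k) (j, l) \<longrightarrow>
        map_pmf (\<lambda>y. (y (i, k), y (j, l))) Q = map_pmf (\<lambda>x. (x i, x j)) p)
   \<and> (\<forall>i<n. \<forall>j<n. \<forall>k<d. \<forall>l<d. (i, k) \<noteq> (j, l) \<and> \<not> infl_shares_source S adj prm (i, k) (j, l) \<longrightarrow>
        map_pmf (\<lambda>y. (y (i, k), y (j, l))) Q
          = pair_pmf (map_pmf (\<lambda>y. y (i, k)) Q) (map_pmf (\<lambda>y. y (j, l)) Q))"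

lemma inflation_model_marginal:
  assumes "inflation_model S adj n p d prm Q" "i < n" "k < d"
  shows "map_pmf (\<lambda>y. y (i, k)) Q = map_pmf (\<lambda>x. x i) p"
  using assms by (simp add: inflation_model_def)

lemma
  assumes "inflation_model S adj n p d prm Q" "i < n" "j < n" "k < d" "l < d"
  shows inflation_model_shared: "i \<noteq> j \<Longrightarrow> infl_shares_source S adj prm (i, k) (j, l) \<Longrightarrow>
      map_pmf (\<lambda>y. (y (i, k), y (j, l))) Q = map_pmf (\<lambda>x. (x i, x j)) p"
    and inflation_model_indep: "(i, k) \<noteq> (j, l) \<Longrightarrow> \<not> infl_shares_source S adj prm (i, k) (j, l) \<Longrightarrow>
      map_pmf (\<lambda>y. (y (i, k), y (j, l))) Q
        = pair_pmf (map_pmf (\<lambda>y. y (i, k)) Q) (map_pmf (\<lambda>y. y (j, l)) Q)"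
  using assms by (simp_all add: inflation_model_def)

lemma causally_consistent_indep:
  assumes "causally_consistent S adj n p Q" "i < n" "j < n" "i \<noteq> j" "\<not> shares_source S adj i j"
  shows "map_pmf (\<lambda>x. (x i, x j)) p = pair_pmf (map_pmf (\<lambda>x. x i) p) (map_pmf (\<lambda>x. x j) p)"
  using assms by (simp add: causally_consistent_def)

lemma causally_consistent_inflation_model:
  assumes "causally_consistent S adj n p Q" "2 \<le> d" "perm_choice S adj n d prm"
  shows "inflation_model S adj n p d prm (Q d prm)"
  using assms by (simp add: causally_consistent_def inflation_model_def)

lemma inflation_model_order_one:
  assumes cc: "causally_consistent S adj n p Q" and perm: "perm_choice S adj n 1 prm"
  shows "inflation_model S adj n p 1 prm (map_pmf (\<lambda>x z. x (fst z)) p)"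
proof -
  have fixes_0: "prm al i 0 = 0" if "al \<in> S" "i < n" "adj al i" for al i
    using perm that permutes_in_image[of "prm al i" "{0..<1}" 0] by (auto simp: perm_choice_def)
  have "\<not> shares_source S adj i j" if "i < n" "j < n" "\<not> infl_shares_source S adj prm (i, 0) (j, 0)" for i j
    using that fixes_0 by (auto simp: shares_source_def infl_shares_source_def)
  then show ?thesis
    using causally_consistent_indep[OF cc] by (auto simp: inflation_model_def map_pmf_comp)
qed

lemma inflation_model_exists:
  assumes "causally_consistent S adj n p Q" "0 < d" "perm_choice S adj n d prm"
  obtains Q' where "inflation_model S adj n p d prm Q'"
proof (cases "d = 1")
  case True
  with assms inflation_model_order_one show ?thesis
    using that by blast
next
  case False
  with assms(2) have "2 \<le> d"
    by simp
  with assms(1,3) show ?thesis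
    using that causally_consistent_inflation_model by blast
qed

lemma infl_shares_source_same_party:
  assumes "perm_choice S adj n d prm" "i < n" "k \<noteq> l"
  shows "\<not> infl_shares_source S adj prm (i, k) (i, l)"
proof
  assume "infl_shares_source S adj prm (i, k) (i, l)"
  then obtain al where "al \<in> S" "adj al i" "prm al i k = prm al i l"
    unfolding infl_shares_source_def by auto
  moreover from calculation have "inj (prm al i)"
    using assms by (auto simp: perm_choice_def intro: permutes_inj)
  ultimately show False
    using \<open>k \<noteq> l\<close> by (auto dest: injD)
qed

lemma ndcs_infl_shares_source_iff:
  assumes "ndcs S adj n" "al \<in> S" "adj al i" "adj al j" "i < n" "j < n" "i \<noteq> j"
  shows "infl_shares_source S adj prm (i, k) (j, l) \<longleftrightarrow> prm al i k = prm al j l"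
  using assms unfolding ndcs_def infl_shares_source_def by (metis fst_conv snd_conv)

lemma inflation_centered_moment:
  fixes p :: "(nat \<Rightarrow> 'a::finite) pmf"
  assumes perm: "perm_choice S adj n d prm" and infl: "inflation_model S adj n p d prm Q"
    and ij: "i < n" "j < n" "k < d" "l < d"
  shows "measure_pmf.expectation Q (\<lambda>y. cnj (centered p f i (y (i, k))) * centered p f j (y (j, l)))
    = (if (i, k) = (j, l) then covariance p f i i
       else if infl_shares_source S adj prm (i, k) (j, l) then covariance p f i j else 0)"
proof -
  let ?g = "centered p f"
  have moment: "measure_pmf.expectation Q (\<lambda>y. cnj (?g i (y (i, k))) * ?g j (y (j, l)))
      = measure_pmf.expectation (map_pmf (\<lambda>y. (y (i, k), y (j, l))) Q)
          (\<lambda>z. cnj (?g i (fst z)) * ?g j (snd z))"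
    by simp
  have marginal: "map_pmf (\<lambda>y. y (j, l)) Q = map_pmf (\<lambda>x. x j) p"
    using inflation_model_marginal[OF infl ij(2,4)] .
  consider "(i, k) = (j, l)"
    | "(i, k) \<noteq> (j, l)" "infl_shares_source S adj prm (i, k) (j, l)"
    | "(i, k) \<noteq> (j, l)" "\<not> infl_shares_source S adj prm (i, k) (j, l)"
    by blast
  then show ?thesis
  proof cases
    case 1
    then have "measure_pmf.expectation Q (\<lambda>y. cnj (?g i (y (i, k))) * ?g j (y (j, l)))
        = measure_pmf.expectation (map_pmf (\<lambda>y. y (j, l)) Q) (\<lambda>a. cnj (?g i a) * ?g i a)"
      by simp
    also have "\<dots> = covariance p f i i"
      using 1 by (simp add: marginal covariance_eq_centered_moment)
    finally show ?thesis
      using 1 by simp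
  next
    case 2
    with infl_shares_source_same_party[OF perm] ij have "i \<noteq> j"
      by auto
    with 2 have shared: "map_pmf (\<lambda>y. (y (i, k), y (j, l))) Q = map_pmf (\<lambda>x. (x i, x j)) p"
      by (intro inflation_model_shared[OF infl ij])
    have "measure_pmf.expectation Q (\<lambda>y. cnj (?g i (y (i, k))) * ?g j (y (j, l)))
        = measure_pmf.expectation (map_pmf (\<lambda>x. (x i, x j)) p) (\<lambda>z. cnj (?g i (fst z)) * ?g j (snd z))"
      by (simp only: moment shared)
    also have "\<dots> = covariance p f i j"
      by (simp add: covariance_eq_centered_moment)
    finally show ?thesis
      using 2 by simp
  next
    case 3
    then have indep: "map_pmf (\<lambda>y. (y (i, k), y (j, l))) Q
        = pair_pmf (map_pmf (\<lambda>y. y (i, k)) Q) (map_pmf (\<lambda>y. y (j, l)) Q)"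
      by (intro inflation_model_indep[OF infl ij])
    have "measure_pmf.expectation Q (\<lambda>y. cnj (?g i (y (i, k))) * ?g j (y (j, l)))
        = measure_pmf.expectation (map_pmf (\<lambda>y. y (i, k)) Q) (\<lambda>a. cnj (?g i a))
          * measure_pmf.expectation (map_pmf (\<lambda>y. y (j, l)) Q) (?g j)"
      unfolding moment indep by (rule expectation_pair_pmf_mult)
    also have "\<dots> = 0"
      by (simp only: marginal expectation_centered mult_zero_right)
    finally show ?thesis
      using 3 by (simp only: if_False)
  qed
qed

lemma
  assumes "twisted_gram S adj n d psi prm W"
  shows twisted_gram_order_pos: "0 < d"
    and twisted_gram_perm_choice: "perm_choice S adj n d prm"
    and twisted_gram_hermitian: "i < n \<Longrightarrow> j < n \<Longrightarrow> W j i = cnj (W i j)"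
    and twisted_gram_diag: "i < n \<Longrightarrow> W i i = cinner d (psi i) (psi i)"
    and twisted_gram_shared: "i < n \<Longrightarrow> j < n \<Longrightarrow> i \<noteq> j \<Longrightarrow> al \<in> S \<Longrightarrow> adj al i \<Longrightarrow> adj al j \<Longrightarrow>
      W i j = cinner d (perm_mat_apply d (prm al i) (psi i)) (perm_mat_apply d (prm al j) (psi j))"
  using assms unfolding twisted_gram_def by fast+

lemma twisted_gram_block_sum:
  fixes p :: "(nat \<Rightarrow> 'a::finite) pmf"
  assumes nd: "ndcs S adj n" and cc: "causally_consistent S adj n p Q"
    and infl: "inflation_model S adj n p d prm Q'" and tg: "twisted_gram S adj n d psi prm W"
    and ij: "i < n" "j < n"
  shows "(\<Sum>k<d. \<Sum>l<d. cnj (v i * psi i k) * (v j * psi j l)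
           * measure_pmf.expectation Q' (\<lambda>y. cnj (centered p f i (y (i, k))) * centered p f j (y (j, l))))
       = cnj (v i) * (covariance p f i j * W i j) * v j"
proof -
  have perm: "perm_choice S adj n d prm"
    using tg by (rule twisted_gram_perm_choice)
  note moment = inflation_centered_moment[OF perm infl]
  consider "i = j" | "i \<noteq> j" "shares_source S adj i j" | "i \<noteq> j" "\<not> shares_source S adj i j"
    by blast
  then show ?thesis
  proof cases
    case 1
    have "(\<Sum>k<d. \<Sum>l<d. cnj (v i * psi i k) * (v j * psi j l)
           * measure_pmf.expectation Q' (\<lambda>y. cnj (centered p f i (y (i, k))) * centered p f j (y (j, l))))
        = (\<Sum>k<d. \<Sum>l<d. if k = l then cnj (v i * psi i k) * (v i * psi i l) * covariance p f i i else 0)"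
      using 1 ij by (intro sum.cong refl) (simp add: moment infl_shares_source_same_party[OF perm])
    also have "\<dots> = cnj (v i) * (covariance p f i i * W i i) * v i"
      using twisted_gram_diag[OF tg ij(1)]
      by (simp add: cinner_def sum_distrib_left sum_distrib_right mult_ac)
    finally show ?thesis
      using 1 by simp
  next
    case 2
    then obtain al where al: "al \<in> S" "adj al i" "adj al j"
      unfolding shares_source_def by auto
    have "prm al i permutes {0..<d}" "prm al j permutes {0..<d}"
      using perm al ij by (auto simp: perm_choice_def)
    then have W: "W i j = (\<Sum>k<d. \<Sum>l<d. if prm al i k = prm al j l then cnj (psi i k) * psi j l else 0)"
      using twisted_gram_shared[OF tg ij 2(1) al] by (simp add: cinner_perm_mat_apply)
    have "(\<Sum>k<d. \<Sum>l<d. cnj (v i * psi i k) * (v j * psi j l)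
           * measure_pmf.expectation Q' (\<lambda>y. cnj (centered p f i (y (i, k))) * centered p f j (y (j, l))))
        = (\<Sum>k<d. \<Sum>l<d. cnj (v i) * (covariance p f i j
             * (if prm al i k = prm al j l then cnj (psi i k) * psi j l else 0)) * v j)"
      using 2 ij by (intro sum.cong refl) (simp add: moment ndcs_infl_shares_source_iff[OF nd al])
    also have "\<dots> = cnj (v i) * (covariance p f i j * W i j) * v j"
      unfolding W by (simp add: sum_distrib_left sum_distrib_right)
    finally show ?thesis .
  next
    case 3
    then have "\<not> infl_shares_source S adj prm (i, k) (j, l)" for k l
      by (auto simp: shares_source_def infl_shares_source_def)
    moreover have "covariance p f i j = 0"
      using 3 ij by (intro covariance_eq_0_if_indep causally_consistent_indep[OF cc])
    ultimately show ?thesis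
      using 3 ij by (simp add: moment)
  qed
qed

lemma covariance_twisted_gram_form_nonneg:
  fixes p :: "(nat \<Rightarrow> 'a::finite) pmf" and Q' :: "(nat \<times> nat \<Rightarrow> 'a) pmf"
  assumes nd: "ndcs S adj n" and cc: "causally_consistent S adj n p Q"
    and infl: "inflation_model S adj n p d prm Q'" and tg: "twisted_gram S adj n d psi prm W"
  shows "\<exists>r\<ge>0. (\<Sum>i<n. \<Sum>j<n. cnj (v i) * (covariance p f i j * W i j) * v j) = complex_of_real r"
proof -
  define c where "c = (\<lambda>(i, k). v i * psi i k)"
  define X :: "nat \<times> nat \<Rightarrow> (nat \<times> nat \<Rightarrow> 'a) \<Rightarrow> complex"
    where "X = (\<lambda>(i, k) y. centered p f i (y (i, k)))"
  have integrable: "integrable (measure_pmf Q') (\<lambda>y. cnj (X a y) * X b y)" for a b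
    using integrable_pmf_finite_range[where \<phi>="\<lambda>y. (y a, y b)"
        and h="\<lambda>z. cnj (centered p f (fst a) (fst z)) * centered p f (fst b) (snd z)"]
    by (simp add: X_def split_beta)
  have "(\<Sum>i<n. \<Sum>j<n. cnj (v i) * (covariance p f i j * W i j) * v j)
      = (\<Sum>i<n. \<Sum>j<n. \<Sum>k<d. \<Sum>l<d.
           cnj (c (i, k)) * c (j, l) * measure_pmf.expectation Q' (\<lambda>y. cnj (X (i, k) y) * X (j, l) y))"
    by (intro sum.cong refl)
      (simp only: c_def X_def prod.case lessThan_iff twisted_gram_block_sum[OF nd cc infl tg])
  also have "\<dots> = (\<Sum>i<n. \<Sum>k<d. \<Sum>j<n. \<Sum>l<d.
           cnj (c (i, k)) * c (j, l) * measure_pmf.expectation Q' (\<lambda>y. cnj (X (i, k) y) * X (j, l) y))"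
    by (rule sum.cong[OF refl], rule sum.swap)
  also have "\<dots> = (\<Sum>a\<in>{..<n} \<times> {..<d}. \<Sum>b\<in>{..<n} \<times> {..<d}.
           cnj (c a) * c b * measure_pmf.expectation Q' (\<lambda>y. cnj (X a y) * X b y))"
    by (simp only: sum.cartesian_product')
  finally show ?thesis
    using second_moment_form_nonneg[of "{..<n} \<times> {..<d}" Q' X c] integrable by simp
qed

lemma psd_covariance_twisted_gram_of_inflation_model:
  fixes p :: "(nat \<Rightarrow> 'a::finite) pmf"
  assumes nd: "ndcs S adj n" and cc: "causally_consistent S adj n p Q"
    and infl: "inflation_model S adj n p d prm Q'" and tg: "twisted_gram S adj n d psi prm W"
  shows "psd n (\<lambda>i j. covariance p f i j * W i j)"
  unfolding psd_def
proof (intro conjI allI impI)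
  fix i j assume "i < n" "j < n"
  then show "covariance p f j i * W j i = cnj (covariance p f i j * W i j)"
    by (simp only: twisted_gram_hermitian[OF tg \<open>i < n\<close> \<open>j < n\<close>]
        covariance_cnj_swap[of p f j i] complex_cnj_mult)
next
  fix v
  obtain r where "r \<ge> 0"
    and form: "(\<Sum>i<n. \<Sum>j<n. cnj (v i) * (covariance p f i j * W i j) * v j) = complex_of_real r"
    using covariance_twisted_gram_form_nonneg[OF nd cc infl tg] by blast
  then show "Im (\<Sum>i<n. \<Sum>j<n. cnj (v i) * (covariance p f i j * W i j) * v j) = 0"
    "0 \<le> Re (\<Sum>i<n. \<Sum>j<n. cnj (v i) * (covariance p f i j * W i j) * v j)"
    by (simp_all only: form Im_complex_of_real Re_complex_of_real order_refl)
qed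

theorem lemma6:
  fixes S :: "'s set" and adj :: "'s \<Rightarrow> nat \<Rightarrow> bool" and n :: nat
    and p :: "(nat \<Rightarrow> 'a::finite) pmf"
    and Q :: "nat \<Rightarrow> ('s \<Rightarrow> nat \<Rightarrow> nat \<Rightarrow> nat) \<Rightarrow> (nat \<times> nat \<Rightarrow> 'a) pmf"
    and f :: "nat \<Rightarrow> 'a \<Rightarrow> complex"
    and d :: nat and psi :: "nat \<Rightarrow> nat \<Rightarrow> complex"
    and prm :: "'s \<Rightarrow> nat \<Rightarrow> nat \<Rightarrow> nat" and W :: "nat \<Rightarrow> nat \<Rightarrow> complex"
  assumes "ndcs S adj n"
    and "causally_consistent S adj n p Q"
    and "twisted_gram S adj n d psi prm W"
  shows "psd n (\<lambda>i j. covariance p f i j * W i j)"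
proof -
  obtain Q' where "inflation_model S adj n p d prm Q'"
    using inflation_model_exists[OF assms(2) twisted_gram_order_pos[OF assms(3)]
        twisted_gram_perm_choice[OF assms(3)]] .
  with assms show ?thesis
    by (intro psd_covariance_twisted_gram_of_inflation_model)
qed

end
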